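(* Let $\Omega\subset\mathbb{R}^d$ be compact with a probability measure $\mu$, let $1\le p<\infty$, let $X_N$ be an $N$-dimensional subspace of $\mathcal{C}(\Omega)$, let $\xi=(\xi^1,\dots,\xi^m)\in\Omega^m$ and let $\mathbf{w}=(w_1,\dots,w_m)$ with $w_j>0$. Suppose that (A1) $C_1\|u\|_{L_p(\Omega,\mu)}\le\|S(u,\xi)\|_{p,\mathbf{w}}$ for all $u\in X_N$, and (A2) $\sum_{\nu=1}^mw_\nu\le C_2$, for some constants $C_1,C_2>0$. Then for any $f\in\mathcal{C}(\Omega)$, $$\|f-\ell p\mathbf{w}(\xi,X_N)(f)\|_{L_p(\Omega,\mu)}\le 2^{1/p}(2C_1^{-1}C_2^{1/p}+1)\,d(f,X_N)_{L_p(\Omega,\mu_{\mathbf{w},\xi})},$$ where $\mu_{\mathbf{w},\xi}=\frac12\mu+\frac1{2\|\mathbf{w}\|_1}\sum_{j=1}^mw_j\delta_{\xi^j}$ and $\|\mathbf{w}\|_1=\sum_{j=1}^mw_j$.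
   Context: $\|S(f,\xi)\|_{p,\mathbf{w}}:=(\sum_{\nu=1}^mw_\nu|f(\xi^\nu)|^p)^{1/p}$. The weighted least squares operator $\ell p\mathbf{w}(\xi,X_N)(f)$ denotes an element $u\in X_N$ minimizing $\|S(f-u,\xi)\|_{p,\mathbf{w}}$. For a probability measure $\nu$, $d(f,X_N)_{L_p(\Omega,\nu)}=\inf_{u\in X_N}\|f-u\|_{L_p(\Omega,\nu)}$. $\delta_x$ is the Dirac measure at $x$. *)

theory Defs
  imports "HOL-Probability.Probability"
begin

definition finite_dim_subspace :: "'a::topological_space set \<Rightarrow> nat \<Rightarrow> ('a \<Rightarrow> real) set \<Rightarrow> bool" where
  "finite_dim_subspace \<Omega> N X \<longleftrightarrow>
     (\<exists>b::nat \<Rightarrow> 'a \<Rightarrow> real.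
        (\<forall>i<N. continuous_on \<Omega> (b i)) \<and>
        (\<forall>c::nat \<Rightarrow> real. (\<forall>x\<in>\<Omega>. (\<Sum>i<N. c i * b i x) = 0) \<longrightarrow> (\<forall>i<N. c i = 0)) \<and>
        X = {(\<lambda>x. \<Sum>i<N. c i * b i x) | c. True})"

text \<open>Discrete weighted norm (sample points indexed by 0..m-1).\<close>
definition disc_norm :: "real \<Rightarrow> (nat \<Rightarrow> real) \<Rightarrow> (nat \<Rightarrow> 'a) \<Rightarrow> nat \<Rightarrow> ('a \<Rightarrow> real) \<Rightarrow> real" where
  "disc_norm p w \<xi> m f = (\<Sum>\<nu><m. w \<nu> * \<bar>f (\<xi> \<nu>)\<bar> powr p) powr (1 / p)"

definition Lp_norm :: "'a measure \<Rightarrow> real \<Rightarrow> ('a \<Rightarrow> real) \<Rightarrow> real" where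
  "Lp_norm M p f = (\<integral>x. \<bar>f x\<bar> powr p \<partial>M) powr (1 / p)"

definition dist_Lp :: "'a measure \<Rightarrow> real \<Rightarrow> ('a \<Rightarrow> real) \<Rightarrow> ('a \<Rightarrow> real) set \<Rightarrow> real" where
  "dist_Lp M p f X = (INF u\<in>X. Lp_norm M p (\<lambda>x. f x - u x))"

definition mu_wxi :: "'a measure \<Rightarrow> nat \<Rightarrow> (nat \<Rightarrow> real) \<Rightarrow> (nat \<Rightarrow> 'a) \<Rightarrow> 'a measure" where
  "mu_wxi \<mu> m w \<xi> = measure_of (space \<mu>) (sets \<mu>)
     (\<lambda>A. ennreal (1/2) * emeasure \<mu> A
          + (\<Sum>j<m. ennreal (w j / (2 * (\<Sum>i<m. w i))) * indicator A (\<xi> j)))"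

definition is_lpw :: "real \<Rightarrow> (nat \<Rightarrow> real) \<Rightarrow> (nat \<Rightarrow> 'a) \<Rightarrow> nat \<Rightarrow> ('a \<Rightarrow> real) set
                      \<Rightarrow> ('a \<Rightarrow> real) \<Rightarrow> ('a \<Rightarrow> real) \<Rightarrow> bool" where
  "is_lpw p w \<xi> m X f u \<longleftrightarrow> u \<in> X \<and>
     (\<forall>v\<in>X. disc_norm p w \<xi> m (\<lambda>x. f x - u x) \<le> disc_norm p w \<xi> m (\<lambda>x. f x - v x))"

end

theory Submission
  imports Defs
begin

(* Fix v in X.  Minkowski's inequality, (A1) applied to v - u in X and the minimality of u give
     ||f - u||_mu <= ||f - v||_mu + (2 / C1) ||S(f - v, xi)||_{p,w}.
   Both terms on the right are L_p norms of f - v: one for mu, the other for the discrete measure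
   sum_j w_j delta_{xi^j}.  As measures, mu <= 2 mu_{w,xi} and
   sum_j w_j delta_{xi^j} <= 2 ||w||_1 mu_{w,xi} <= 2 C2 mu_{w,xi}, so the right-hand side is at most
   2^(1/p) (2 C1^-1 C2^(1/p) + 1) ||f - v||_{L_p(mu_{w,xi})}.  Take the infimum over v. *)

lemma powr_convex_nonneg:
  fixes p :: real
  assumes "1 \<le> p"
  shows "convex_on {0..} (\<lambda>x. x powr p)"
proof (rule convex_onI)
  fix t x y :: real
  assume t: "0 < t" "t < 1" and xy: "x \<in> {0..}" "y \<in> {0..}"
  have small: "c powr p \<le> c" if "0 \<le> c" "c \<le> 1" for c :: real
    using assms that by (metis le_less powr_le_one_le powr_nonneg_iff)
  consider "0 < x" "0 < y" | "x = 0" | "y = 0" using xy by force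
  then show "((1 - t) *\<^sub>R x + t *\<^sub>R y) powr p \<le> (1 - t) * x powr p + t * y powr p"
  proof cases
    case 1
    then show ?thesis using convex_onD[OF powr_convex[OF assms], of t x y] t by auto
  next
    case 2
    have "(t * y) powr p = t powr p * y powr p" using t xy by (simp add: powr_mult)
    also have "\<dots> \<le> t * y powr p" using small[of t] t by (intro mult_right_mono) auto
    finally show ?thesis using 2 by simp
  next
    case 3
    have "((1 - t) * x) powr p = (1 - t) powr p * x powr p" using t xy by (simp add: powr_mult)
    also have "\<dots> \<le> (1 - t) * x powr p" using small[of "1 - t"] t by (intro mult_right_mono) auto
    finally show ?thesis using 3 by simp
  qed
qed (simp add: convex_real_interval)

lemma abs_add_powr_le:
  fixes x y t p :: real
  assumes t: "0 < t" "t < 1" and p: "1 \<le> p"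
  shows "\<bar>x + y\<bar> powr p \<le> t powr (1 - p) * \<bar>x\<bar> powr p + (1 - t) powr (1 - p) * \<bar>y\<bar> powr p"
proof -
  have rescale: "s * (z / s) powr p = s powr (1 - p) * z powr p" if "0 < s" "0 \<le> z" for s z :: real
    using that by (simp add: powr_divide powr_diff)
  have "\<bar>x + y\<bar> \<le> (1 - t) * (\<bar>y\<bar> / (1 - t)) + t * (\<bar>x\<bar> / t)"
    using t abs_triangle_ineq[of x y] by simp
  then have "\<bar>x + y\<bar> powr p \<le> ((1 - t) * (\<bar>y\<bar> / (1 - t)) + t * (\<bar>x\<bar> / t)) powr p"
    using p by (intro powr_mono2) auto
  also have "\<dots> \<le> (1 - t) * (\<bar>y\<bar> / (1 - t)) powr p + t * (\<bar>x\<bar> / t) powr p"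
    using convex_onD[OF powr_convex_nonneg[OF p], of t "\<bar>y\<bar> / (1 - t)" "\<bar>x\<bar> / t"] t by simp
  also have "\<dots> = t powr (1 - p) * \<bar>x\<bar> powr p + (1 - t) powr (1 - p) * \<bar>y\<bar> powr p"
    using t by (simp add: rescale)
  finally show ?thesis .
qed

lemma divide_powr_one_minus_mult_powr:
  fixes c s p :: real
  assumes "0 < c" "0 < s"
  shows "(c / s) powr (1 - p) * c powr p = s powr (p - 1) * c"
proof -
  have "(c / s) powr (1 - p) * c powr p = c powr (1 - p + p) / s powr (1 - p)"
    using assms by (simp add: powr_divide powr_add[symmetric])
  also have "s powr (1 - p) = inverse (s powr (p - 1))"
    by (simp add: powr_minus[symmetric])
  finally show ?thesis
    using assms by (simp add: divide_inverse mult.commute)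
qed

lemma Lp_norm_nonneg: "0 \<le> Lp_norm M p f"
  by (simp add: Lp_norm_def)

lemma Lp_norm_powr:
  assumes "0 < p"
  shows "Lp_norm M p f powr p = (\<integral>x. \<bar>f x\<bar> powr p \<partial>M)"
  using assms by (simp add: Lp_norm_def powr_powr integral_nonneg_AE)

lemma integral_abs_powr_le:
  assumes "0 < p" "Lp_norm M p f \<le> a"
  shows "(\<integral>x. \<bar>f x\<bar> powr p \<partial>M) \<le> a powr p"
proof -
  have "(\<integral>x. \<bar>f x\<bar> powr p \<partial>M) = Lp_norm M p f powr p"
    using assms(1) by (simp add: Lp_norm_powr)
  also have "\<dots> \<le> a powr p"
    using assms by (intro powr_mono2) (auto simp: Lp_norm_nonneg)
  finally show ?thesis .
qed

lemma Lp_norm_triangle: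
  fixes F G :: "'a \<Rightarrow> real"
  assumes p: "1 \<le> p"
    and F: "integrable M (\<lambda>x. \<bar>F x\<bar> powr p)" and G: "integrable M (\<lambda>x. \<bar>G x\<bar> powr p)"
    and FG: "integrable M (\<lambda>x. \<bar>F x + G x\<bar> powr p)"
  shows "Lp_norm M p (\<lambda>x. F x + G x) \<le> Lp_norm M p F + Lp_norm M p G"
proof (rule field_le_epsilon)
  fix e :: real
  assume "0 < e"
  \<comment> \<open>The shift by \<open>e / 2\<close> makes \<open>a\<close> and \<open>b\<close> positive, so that the weight \<open>t = a / (a + b)\<close> is admissible.\<close>
  define a where "a = Lp_norm M p F + e / 2"
  define b where "b = Lp_norm M p G + e / 2"
  define t where "t = a / (a + b)"
  have ab: "0 < a" "0 < b"
    using \<open>0 < e\<close> by (auto simp: a_def b_def intro!: add_nonneg_pos Lp_norm_nonneg)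
  then have t: "0 < t" "t < 1" "1 - t = b / (a + b)"
    by (auto simp: t_def field_simps)
  have IF: "(\<integral>x. \<bar>F x\<bar> powr p \<partial>M) \<le> a powr p"
    using p \<open>0 < e\<close> by (intro integral_abs_powr_le) (auto simp: a_def)
  have IG: "(\<integral>x. \<bar>G x\<bar> powr p \<partial>M) \<le> b powr p"
    using p \<open>0 < e\<close> by (intro integral_abs_powr_le) (auto simp: b_def)
  have "(\<integral>x. \<bar>F x + G x\<bar> powr p \<partial>M)
      \<le> (\<integral>x. t powr (1 - p) * \<bar>F x\<bar> powr p + (1 - t) powr (1 - p) * \<bar>G x\<bar> powr p \<partial>M)"
    using F G FG abs_add_powr_le[OF t(1,2) p] by (intro integral_mono) auto
  also have "\<dots> = t powr (1 - p) * (\<integral>x. \<bar>F x\<bar> powr p \<partial>M)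
      + (1 - t) powr (1 - p) * (\<integral>x. \<bar>G x\<bar> powr p \<partial>M)"
    using F G by simp
  also have "\<dots> \<le> t powr (1 - p) * a powr p + (1 - t) powr (1 - p) * b powr p"
    using IF IG by (intro add_mono mult_left_mono) auto
  also have "\<dots> = (a + b) powr (p - 1) * a + (a + b) powr (p - 1) * b"
    unfolding t(3) unfolding t_def
    by (simp only: divide_powr_one_minus_mult_powr ab add_pos_pos)
  also have "\<dots> = (a + b) powr (p - 1) * (a + b)"
    by (simp add: distrib_left)
  also have "\<dots> = (a + b) powr p"
    using ab by (simp add: powr_diff)
  finally have "Lp_norm M p (\<lambda>x. F x + G x) \<le> ((a + b) powr p) powr (1 / p)"
    unfolding Lp_norm_def using p by (intro powr_mono2) (auto intro: integral_nonneg_AE)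
  also have "\<dots> = a + b"
    using ab p by (simp add: powr_powr)
  finally show "Lp_norm M p (\<lambda>x. F x + G x) \<le> Lp_norm M p F + Lp_norm M p G + e"
    by (simp add: a_def b_def)
qed

lemma Lp_norm_mono_measure:
  fixes g :: "'a \<Rightarrow> real"
  assumes sets: "sets M = sets N" and le: "\<And>A. A \<in> sets N \<Longrightarrow> emeasure M A \<le> ennreal c * emeasure N A"
    and c: "0 \<le> c" and p: "0 < p" and g: "g \<in> borel_measurable N"
    and int: "integrable N (\<lambda>x. \<bar>g x\<bar> powr p)"
  shows "Lp_norm M p g \<le> c powr (1 / p) * Lp_norm N p g"
proof (cases "integrable M (\<lambda>x. \<bar>g x\<bar> powr p)")
  case True
  have "emeasure M A \<le> ennreal c * emeasure N A" for A
    using le sets by (cases "A \<in> sets N") (auto simp: emeasure_notin_sets)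
  then have "M \<le> scale_measure (ennreal c) N"
    using sets sets_eq_imp_space_eq[OF sets] by (simp add: le_measure_iff le_fun_def space_scale_measure)
  then have "(\<integral>\<^sup>+x. \<bar>g x\<bar> powr p \<partial>M) \<le> (\<integral>\<^sup>+x. \<bar>g x\<bar> powr p \<partial>scale_measure (ennreal c) N)"
    by (intro nn_integral_mono_measure) (simp add: sets)
  also have "\<dots> = ennreal c * (\<integral>\<^sup>+x. \<bar>g x\<bar> powr p \<partial>N)"
    using g by (intro nn_integral_scale_measure) measurable
  finally have "(\<integral>x. \<bar>g x\<bar> powr p \<partial>M) \<le> c * (\<integral>x. \<bar>g x\<bar> powr p \<partial>N)"
    using True int c
    by (simp add: nn_integral_eq_integral ennreal_mult[symmetric] ennreal_le_iff integral_nonneg_AE)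
  then have "Lp_norm M p g \<le> (c * (\<integral>x. \<bar>g x\<bar> powr p \<partial>N)) powr (1 / p)"
    unfolding Lp_norm_def using p by (intro powr_mono2) (auto intro: integral_nonneg_AE)
  then show ?thesis
    using c by (simp add: Lp_norm_def powr_mult integral_nonneg_AE)
next
  case False
  \<comment> \<open>then the Bochner integral in \<open>Lp_norm M p g\<close> is \<open>0\<close>\<close>
  then show ?thesis
    using c by (simp add: Lp_norm_def not_integrable_integral_eq)
qed

lemma disc_norm_eq_Lp_norm_point_measure:
  assumes "\<forall>j<m. 0 \<le> w j"
  shows "disc_norm p w \<xi> m F = Lp_norm (point_measure {..<m} (\<lambda>j. ennreal (w j))) p (\<lambda>j. F (\<xi> j))"
  unfolding disc_norm_def Lp_norm_def
  using assms by (subst lebesgue_integral_point_measure_finite) auto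

lemma disc_norm_triangle:
  fixes F G :: "'a \<Rightarrow> real"
  assumes "1 \<le> p" "\<forall>j<m. 0 \<le> w j"
  shows "disc_norm p w \<xi> m (\<lambda>x. F x + G x) \<le> disc_norm p w \<xi> m F + disc_norm p w \<xi> m G"
  using Lp_norm_triangle[OF assms(1) integrable_point_measure_finite integrable_point_measure_finite
      integrable_point_measure_finite, of "{..<m}" w "\<lambda>j. F (\<xi> j)" "\<lambda>j. G (\<xi> j)"]
  by (simp add: disc_norm_eq_Lp_norm_point_measure[OF assms(2)])

definition sample_measure :: "'a measure \<Rightarrow> nat \<Rightarrow> (nat \<Rightarrow> real) \<Rightarrow> (nat \<Rightarrow> 'a) \<Rightarrow> 'a measure" where
  "sample_measure M m w \<xi> = distr (point_measure {..<m} (\<lambda>j. ennreal (w j))) M \<xi>"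

lemma sets_sample_measure [simp, measurable_cong]: "sets (sample_measure M m w \<xi>) = sets M"
  by (simp add: sample_measure_def)

lemma measurable_sample_points:
  assumes "\<forall>j<m. \<xi> j \<in> space M"
  shows "\<xi> \<in> measurable (point_measure {..<m} (\<lambda>j. ennreal (w j))) M"
  using assms by (simp add: point_measure_def Pi_iff)

lemma emeasure_sample_measure:
  assumes "\<forall>j<m. \<xi> j \<in> space M" and "A \<in> sets M"
  shows "emeasure (sample_measure M m w \<xi>) A = (\<Sum>j<m. ennreal (w j) * indicator A (\<xi> j))"
proof -
  have "emeasure (sample_measure M m w \<xi>) A = (\<Sum>j\<in>\<xi> -` A \<inter> {..<m}. ennreal (w j))"
    using assms measurable_sample_points[OF assms(1)]
    by (simp add: sample_measure_def emeasure_distr space_point_measure emeasure_point_measure_finite)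
  also have "\<dots> = (\<Sum>j<m. ennreal (w j) * indicator A (\<xi> j))"
    by (rule sum.mono_neutral_cong_left) (auto simp: indicator_def)
  finally show ?thesis .
qed

lemma disc_norm_eq_Lp_norm_sample_measure:
  assumes "\<forall>j<m. 0 \<le> w j" "\<forall>j<m. \<xi> j \<in> space M" "g \<in> borel_measurable M"
  shows "disc_norm p w \<xi> m g = Lp_norm (sample_measure M m w \<xi>) p g"
  using assms measurable_sample_points[OF assms(2)]
  by (simp add: disc_norm_eq_Lp_norm_point_measure sample_measure_def Lp_norm_def integral_distr)

lemma sets_mu_wxi [simp, measurable_cong]: "sets (mu_wxi \<mu> m w \<xi>) = sets \<mu>"
  and space_mu_wxi [simp]: "space (mu_wxi \<mu> m w \<xi>) = space \<mu>"
  by (simp_all add: mu_wxi_def sets_measure_of[OF sets.space_closed])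

lemma countably_additive_emeasure_add_point_masses:
  fixes a :: ennreal and c :: "nat \<Rightarrow> ennreal"
  shows "countably_additive (sets M) (\<lambda>A. a * emeasure M A + (\<Sum>j<m. c j * indicator A (\<xi> j)))"
proof (rule countably_additiveI)
  fix A :: "nat \<Rightarrow> 'a set"
  assume A: "range A \<subseteq> sets M" "disjoint_family A"
  have "(\<Sum>i. a * emeasure M (A i) + (\<Sum>j<m. c j * indicator (A i) (\<xi> j)))
      = (\<Sum>i. a * emeasure M (A i)) + (\<Sum>i. \<Sum>j<m. c j * indicator (A i) (\<xi> j))"
    by (rule suminf_add[symmetric]) (auto intro: summableI)
  also have "(\<Sum>i. a * emeasure M (A i)) = a * emeasure M (\<Union>i. A i)"
    using suminf_emeasure[OF A] by simp
  also have "(\<Sum>i. \<Sum>j<m. c j * indicator (A i) (\<xi> j)) = (\<Sum>j<m. \<Sum>i. c j * indicator (A i) (\<xi> j))"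
    by (rule suminf_sum) (auto intro: summableI)
  also have "\<dots> = (\<Sum>j<m. c j * indicator (\<Union>i. A i) (\<xi> j))"
    using suminf_indicator[OF A(2)] by simp
  finally show "(\<Sum>i. a * emeasure M (A i) + (\<Sum>j<m. c j * indicator (A i) (\<xi> j)))
      = a * emeasure M (\<Union>i. A i) + (\<Sum>j<m. c j * indicator (\<Union>i. A i) (\<xi> j))" .
qed

lemma emeasure_mu_wxi:
  assumes "A \<in> sets \<mu>"
  shows "emeasure (mu_wxi \<mu> m w \<xi>) A
    = ennreal (1/2) * emeasure \<mu> A + (\<Sum>j<m. ennreal (w j / (2 * (\<Sum>i<m. w i))) * indicator A (\<xi> j))"
  unfolding mu_wxi_def using assms
  by (intro emeasure_measure_of_sigma sets.sigma_algebra_axioms countably_additive_emeasure_add_point_masses)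
    (auto simp: positive_def)

lemma finite_measure_mu_wxi:
  assumes "finite_measure \<mu>"
  shows "finite_measure (mu_wxi \<mu> m w \<xi>)"
proof (rule finite_measureI)
  show "emeasure (mu_wxi \<mu> m w \<xi>) (space (mu_wxi \<mu> m w \<xi>)) \<noteq> \<infinity>"
    using finite_measure.emeasure_finite[OF assms]
    by (simp add: emeasure_mu_wxi ennreal_mult_eq_top_iff)
qed

lemma emeasure_le_mu_wxi:
  assumes "A \<in> sets \<mu>"
  shows "emeasure \<mu> A \<le> 2 * emeasure (mu_wxi \<mu> m w \<xi>) A"
proof -
  have "emeasure \<mu> A = 2 * (ennreal (1/2) * emeasure \<mu> A)"
    by (subst mult.assoc[symmetric], subst ennreal_numeral[symmetric], subst ennreal_mult[symmetric]) auto
  also have "\<dots> \<le> 2 * emeasure (mu_wxi \<mu> m w \<xi>) A"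
    using assms by (intro mult_left_mono) (auto simp: emeasure_mu_wxi)
  finally show ?thesis .
qed

lemma emeasure_sample_measure_le_mu_wxi:
  assumes w: "\<forall>j<m. 0 \<le> w j" and \<xi>: "\<forall>j<m. \<xi> j \<in> space \<mu>" and A: "A \<in> sets \<mu>"
  shows "emeasure (sample_measure \<mu> m w \<xi>) A
    \<le> ennreal (2 * (\<Sum>j<m. w j)) * emeasure (mu_wxi \<mu> m w \<xi>) A"
proof -
  define W where "W = (\<Sum>j<m. w j)"
  \<comment> \<open>also for \<open>W = 0\<close>, where all weights vanish and \<open>w j / (2 * W) = 0\<close>\<close>
  have split: "ennreal (w j) = ennreal (2 * W) * ennreal (w j / (2 * W))" if "j < m" for j
  proof (cases "W = 0")
    case True
    then have "w j = 0" using sum_nonneg_eq_0_iff[of "{..<m}" w] w that by (auto simp: W_def)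
    then show ?thesis by simp
  next
    case False
    moreover have "0 \<le> W" unfolding W_def using w by (intro sum_nonneg) auto
    ultimately have "0 < W" by simp
    then show ?thesis using w that by (subst ennreal_mult[symmetric]) auto
  qed
  have "emeasure (sample_measure \<mu> m w \<xi>) A = (\<Sum>j<m. ennreal (w j) * indicator A (\<xi> j))"
    by (rule emeasure_sample_measure[OF \<xi> A])
  also have "\<dots> = ennreal (2 * W) * (\<Sum>j<m. ennreal (w j / (2 * W)) * indicator A (\<xi> j))"
    unfolding sum_distrib_left by (intro sum.cong) (simp_all add: split mult.assoc)
  also have "\<dots> \<le> ennreal (2 * W) * emeasure (mu_wxi \<mu> m w \<xi>) A"
    using A by (intro mult_left_mono) (auto simp: emeasure_mu_wxi W_def)
  finally show ?thesis by (simp add: W_def)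
qed

lemma Lp_norm_le_mu_wxi:
  assumes "0 < p" "g \<in> borel_measurable \<mu>" "integrable (mu_wxi \<mu> m w \<xi>) (\<lambda>x. \<bar>g x\<bar> powr p)"
  shows "Lp_norm \<mu> p g \<le> 2 powr (1 / p) * Lp_norm (mu_wxi \<mu> m w \<xi>) p g"
  using assms by (intro Lp_norm_mono_measure) (auto simp: emeasure_le_mu_wxi)

lemma disc_norm_le_mu_wxi:
  assumes "0 < p" "\<forall>j<m. 0 \<le> w j" "\<forall>j<m. \<xi> j \<in> space \<mu>" "g \<in> borel_measurable \<mu>"
    and "integrable (mu_wxi \<mu> m w \<xi>) (\<lambda>x. \<bar>g x\<bar> powr p)"
  shows "disc_norm p w \<xi> m g \<le> (2 * (\<Sum>j<m. w j)) powr (1 / p) * Lp_norm (mu_wxi \<mu> m w \<xi>) p g"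
  unfolding disc_norm_eq_Lp_norm_sample_measure[OF assms(2-4)] using assms
  by (intro Lp_norm_mono_measure) (auto simp: emeasure_sample_measure_le_mu_wxi intro!: sum_nonneg)

lemma finite_dim_subspace_continuous_on:
  assumes "finite_dim_subspace \<Omega> N X" "v \<in> X"
  shows "continuous_on \<Omega> v"
  using assms unfolding finite_dim_subspace_def by (auto intro!: continuous_intros)

lemma finite_dim_subspace_diff:
  assumes "finite_dim_subspace \<Omega> N X" "v \<in> X" "v' \<in> X"
  shows "(\<lambda>x. v x - v' x) \<in> X"
proof -
  obtain b where X: "X = {(\<lambda>x. \<Sum>i<N. c i * b i x) | c. True}"
    using assms(1) unfolding finite_dim_subspace_def by blast
  then obtain c c' where "v = (\<lambda>x. \<Sum>i<N. c i * b i x)" "v' = (\<lambda>x. \<Sum>i<N. c' i * b i x)"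
    using assms(2,3) by blast
  then have "(\<lambda>x. v x - v' x) = (\<lambda>x. \<Sum>i<N. (c i - c' i) * b i x)"
    by (simp add: sum_subtractf[symmetric] left_diff_distrib)
  then show ?thesis unfolding X by (intro CollectI exI[of _ "\<lambda>i. c i - c' i"]) simp
qed

lemma finite_dim_subspace_nonempty: "finite_dim_subspace \<Omega> N X \<Longrightarrow> X \<noteq> {}"
  unfolding finite_dim_subspace_def by blast

lemma borel_measurable_continuous_on_sets_eq:
  assumes "sets M = sets (restrict_space borel \<Omega>)" "continuous_on \<Omega> g"
  shows "g \<in> borel_measurable M"
  using borel_measurable_continuous_on_restrict[OF assms(2)] measurable_cong_sets[OF assms(1) refl] by blast

lemma integrable_abs_powr_continuous_on:
  fixes g :: "'a::topological_space \<Rightarrow> real"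
  assumes "finite_measure M" "compact \<Omega>" "sets M = sets (restrict_space borel \<Omega>)"
    and "continuous_on \<Omega> g" "0 \<le> p"
  shows "integrable M (\<lambda>x. \<bar>g x\<bar> powr p)"
proof -
  obtain B where B: "\<forall>x\<in>\<Omega>. \<bar>g x\<bar> \<le> B"
    using compact_imp_bounded[OF compact_continuous_image[OF assms(4,2)]]
    unfolding bounded_iff by auto
  have "space M = \<Omega>"
    using sets_eq_imp_space_eq[OF assms(3)] by (simp add: space_restrict_space)
  then show ?thesis
    using B assms borel_measurable_continuous_on_sets_eq[OF assms(3,4)]
    by (intro finite_measure.integrable_const_bound[where B = "B powr p"]) (auto intro!: AE_I2 powr_mono2)
qed

lemma Lp_norm_lpw_error_le:
  fixes f u v :: "'a \<Rightarrow> real"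
  assumes p: "1 \<le> p" and w: "\<forall>j<m. 0 \<le> w j" and C1: "0 < C1"
    and A1: "\<forall>v\<in>X. C1 * Lp_norm \<mu> p v \<le> disc_norm p w \<xi> m v"
    and X_diff: "\<And>v v'. v \<in> X \<Longrightarrow> v' \<in> X \<Longrightarrow> (\<lambda>x. v x - v' x) \<in> X"
    and lpw: "is_lpw p w \<xi> m X f u" and v: "v \<in> X"
    and int_fv: "integrable \<mu> (\<lambda>x. \<bar>f x - v x\<bar> powr p)"
    and int_vu: "integrable \<mu> (\<lambda>x. \<bar>v x - u x\<bar> powr p)"
    and int_fu: "integrable \<mu> (\<lambda>x. \<bar>f x - u x\<bar> powr p)"
  shows "Lp_norm \<mu> p (\<lambda>x. f x - u x)
    \<le> Lp_norm \<mu> p (\<lambda>x. f x - v x) + 2 / C1 * disc_norm p w \<xi> m (\<lambda>x. f x - v x)"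
proof -
  have u: "u \<in> X" and best: "disc_norm p w \<xi> m (\<lambda>x. f x - u x) \<le> disc_norm p w \<xi> m (\<lambda>x. f x - v x)"
    using lpw v unfolding is_lpw_def by auto
  have triangle: "Lp_norm \<mu> p (\<lambda>x. f x - u x)
      \<le> Lp_norm \<mu> p (\<lambda>x. f x - v x) + Lp_norm \<mu> p (\<lambda>x. v x - u x)"
    using Lp_norm_triangle[OF p int_fv int_vu] int_fu by simp
  have "C1 * Lp_norm \<mu> p (\<lambda>x. v x - u x) \<le> disc_norm p w \<xi> m (\<lambda>x. v x - u x)"
    using A1 X_diff[OF v u] by blast
  moreover have "disc_norm p w \<xi> m (\<lambda>x. v x - u x)
      \<le> disc_norm p w \<xi> m (\<lambda>x. v x - f x) + disc_norm p w \<xi> m (\<lambda>x. f x - u x)"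
    using disc_norm_triangle[OF p w, where F = "\<lambda>x. v x - f x" and G = "\<lambda>x. f x - u x"] by simp
  moreover have "disc_norm p w \<xi> m (\<lambda>x. v x - f x) = disc_norm p w \<xi> m (\<lambda>x. f x - v x)"
    by (simp add: disc_norm_def abs_minus_commute)
  ultimately have "C1 * Lp_norm \<mu> p (\<lambda>x. v x - u x) \<le> 2 * disc_norm p w \<xi> m (\<lambda>x. f x - v x)"
    using best by linarith
  then have "Lp_norm \<mu> p (\<lambda>x. v x - u x) \<le> 2 / C1 * disc_norm p w \<xi> m (\<lambda>x. f x - v x)"
    using C1 by (simp add: field_simps)
  with triangle show ?thesis by linarith
qed

lemma Lp_norm_lpw_error_le_mu_wxi:
  fixes f u v :: "'a \<Rightarrow> real"
  assumes p: "1 \<le> p" and w: "\<forall>j<m. 0 \<le> w j" and \<xi>: "\<forall>j<m. \<xi> j \<in> space \<mu>"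
    and C1: "0 < C1" and C2: "(\<Sum>j<m. w j) \<le> C2"
    and A1: "\<forall>v\<in>X. C1 * Lp_norm \<mu> p v \<le> disc_norm p w \<xi> m v"
    and X_diff: "\<And>v v'. v \<in> X \<Longrightarrow> v' \<in> X \<Longrightarrow> (\<lambda>x. v x - v' x) \<in> X"
    and lpw: "is_lpw p w \<xi> m X f u" and v: "v \<in> X"
    and meas_fv: "(\<lambda>x. f x - v x) \<in> borel_measurable \<mu>"
    and int_fv: "integrable \<mu> (\<lambda>x. \<bar>f x - v x\<bar> powr p)"
    and int_vu: "integrable \<mu> (\<lambda>x. \<bar>v x - u x\<bar> powr p)"
    and int_fu: "integrable \<mu> (\<lambda>x. \<bar>f x - u x\<bar> powr p)"
    and int_fv_mu_wxi: "integrable (mu_wxi \<mu> m w \<xi>) (\<lambda>x. \<bar>f x - v x\<bar> powr p)"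
  shows "Lp_norm \<mu> p (\<lambda>x. f x - u x)
    \<le> 2 powr (1 / p) * (2 / C1 * C2 powr (1 / p) + 1) * Lp_norm (mu_wxi \<mu> m w \<xi>) p (\<lambda>x. f x - v x)"
proof -
  define R where "R = Lp_norm (mu_wxi \<mu> m w \<xi>) p (\<lambda>x. f x - v x)"
  have "0 \<le> C2"
    using w by (intro order_trans[OF _ C2] sum_nonneg) auto
  have L: "Lp_norm \<mu> p (\<lambda>x. f x - v x) \<le> 2 powr (1 / p) * R"
    unfolding R_def using p meas_fv int_fv_mu_wxi by (intro Lp_norm_le_mu_wxi) auto
  have "disc_norm p w \<xi> m (\<lambda>x. f x - v x) \<le> (2 * (\<Sum>j<m. w j)) powr (1 / p) * R"
    unfolding R_def using p w \<xi> meas_fv int_fv_mu_wxi by (intro disc_norm_le_mu_wxi) auto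
  also have "\<dots> \<le> (2 * C2) powr (1 / p) * R"
    using C2 p w by (intro mult_right_mono powr_mono2) (auto simp: R_def Lp_norm_nonneg intro: sum_nonneg)
  finally have D: "disc_norm p w \<xi> m (\<lambda>x. f x - v x) \<le> (2 * C2) powr (1 / p) * R" .
  have "Lp_norm \<mu> p (\<lambda>x. f x - u x)
      \<le> Lp_norm \<mu> p (\<lambda>x. f x - v x) + 2 / C1 * disc_norm p w \<xi> m (\<lambda>x. f x - v x)"
    by (rule Lp_norm_lpw_error_le[OF p w C1 A1 X_diff lpw v int_fv int_vu int_fu])
  also have "\<dots> \<le> 2 powr (1 / p) * R + 2 / C1 * ((2 * C2) powr (1 / p) * R)"
    using C1 by (intro add_mono[OF L] mult_left_mono[OF D]) simp
  also have "\<dots> = 2 powr (1 / p) * (2 / C1 * C2 powr (1 / p) + 1) * R"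
    using \<open>0 \<le> C2\<close> by (simp add: powr_mult algebra_simps)
  finally show ?thesis
    by (simp add: R_def)
qed

lemma le_mult_dist_Lp:
  assumes "X \<noteq> {}" "0 < K" "\<And>v. v \<in> X \<Longrightarrow> a \<le> K * Lp_norm M p (\<lambda>x. f x - v x)"
  shows "a \<le> K * dist_Lp M p f X"
proof -
  have "a / K \<le> dist_Lp M p f X"
    unfolding dist_Lp_def
    using assms by (intro cINF_greatest) (auto simp: pos_divide_le_eq mult.commute)
  then show ?thesis
    using assms(2) by (simp add: pos_divide_le_eq mult.commute)
qed

theorem theorem2p1:
  fixes \<Omega> :: "'a::euclidean_space set" and \<mu> :: "'a measure" and p :: real
    and N m :: nat and X :: "('a \<Rightarrow> real) set" and \<xi> :: "nat \<Rightarrow> 'a" and w :: "nat \<Rightarrow> real"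
    and C1 C2 :: real and f u :: "'a \<Rightarrow> real"
  assumes "compact \<Omega>"
    and "prob_space \<mu>"
    and "sets \<mu> = sets (restrict_space borel \<Omega>)"
    and "1 \<le> p"
    and "finite_dim_subspace \<Omega> N X"
    and "\<forall>j<m. \<xi> j \<in> \<Omega>"
    and "\<forall>j<m. w j > 0"
    and "C1 > 0" and "C2 > 0"
    and A1: "\<forall>v\<in>X. C1 * Lp_norm \<mu> p v \<le> disc_norm p w \<xi> m v"
    and A2: "(\<Sum>\<nu><m. w \<nu>) \<le> C2"
    and "continuous_on \<Omega> f"
    and "is_lpw p w \<xi> m X f u"
  shows "Lp_norm \<mu> p (\<lambda>x. f x - u x)
         \<le> 2 powr (1 / p) * (2 / C1 * C2 powr (1 / p) + 1) * dist_Lp (mu_wxi \<mu> m w \<xi>) p f X"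
proof (rule le_mult_dist_Lp)
  show "X \<noteq> {}"
    using assms(5) by (rule finite_dim_subspace_nonempty)
  show "0 < 2 powr (1 / p) * (2 / C1 * C2 powr (1 / p) + 1)"
    using assms(8,9) by (intro mult_pos_pos add_nonneg_pos) auto
  fix v assume v: "v \<in> X"
  have fin: "finite_measure \<mu>" "finite_measure (mu_wxi \<mu> m w \<xi>)"
    using assms(2) finite_measure_mu_wxi by (auto simp: prob_space_def)
  have w: "\<forall>j<m. 0 \<le> w j" and \<xi>: "\<forall>j<m. \<xi> j \<in> space \<mu>"
    using assms(6,7) sets_eq_imp_space_eq[OF assms(3)] by (auto simp: space_restrict_space less_imp_le)
  have "0 \<le> p" and u: "u \<in> X"
    using assms(4,13) by (auto simp: is_lpw_def)
  note int = integrable_abs_powr_continuous_on[OF fin(1) assms(1) assms(3) _ \<open>0 \<le> p\<close>]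
    integrable_abs_powr_continuous_on[OF fin(2) assms(1) _ _ \<open>0 \<le> p\<close>]
  note X_cont = finite_dim_subspace_continuous_on[OF assms(5)]
  have cont: "continuous_on \<Omega> (\<lambda>x. f x - v x)" "continuous_on \<Omega> (\<lambda>x. v x - u x)"
    "continuous_on \<Omega> (\<lambda>x. f x - u x)"
    using assms(12) X_cont[OF v] X_cont[OF u] by (auto intro: continuous_on_diff)
  show "Lp_norm \<mu> p (\<lambda>x. f x - u x)
      \<le> 2 powr (1 / p) * (2 / C1 * C2 powr (1 / p) + 1) * Lp_norm (mu_wxi \<mu> m w \<xi>) p (\<lambda>x. f x - v x)"
    using assms(3) by (intro Lp_norm_lpw_error_le_mu_wxi[OF assms(4) w \<xi> assms(8) A2 A1
        finite_dim_subspace_diff[OF assms(5)] assms(13) v borel_measurable_continuous_on_sets_eq[OF assms(3)]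
        int(1) int(1) int(1) int(2)] cont) simp_all
qed

end
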